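(* Let $\mathcal{K}$ be a Fraïssé class in a finite relational language $\mathcal{L}$, let $\mathbf{K}=\mathrm{Flim}(\mathcal{K})$ have finite big Ramsey degrees, and let $\mathbf{K}^*$ and $\mathbf{K}'$ be recurrent big Ramsey structures for $\mathbf{K}$ in finite relational languages $\mathcal{L}^*\supseteq\mathcal{L}$ and $\mathcal{L}'\supseteq\mathcal{L}$ respectively. Then each of $\mathbf{K}^*$, $\mathbf{K}'$ is bi-interpretable with a substructure of the other.
   Context: For structures $\mathbf{A},\mathbf{B}$, $\mathrm{Emb}(\mathbf{A},\mathbf{B})$ is the set of embeddings. For $\mathbf{A}\in\mathcal{K}$, the big Ramsey degree $\mathrm{BRD}(\mathbf{A},\mathbf{K})$ is the least $t$ (if it exists) such that for every $r>t$ and every coloring $\chi:\mathrm{Emb}(\mathbf{A},\mathbf{K})\to r$ there is $g\in\mathrm{Emb}(\mathbf{K},\mathbf{K})$ with $|\chi[g\circ\mathrm{Emb}(\mathbf{A},\mathbf{K})]|\le t$. For $\mathcal{L}^*\supseteq\mathcal{L}$ and an $\mathcal{L}^*$-expansion $\mathbf{M}^*$ of $\mathbf{M}$ (same underlying set, $\mathcal{L}$-reduct equal to $\mathbf{M}$), $\mathbf{M}^*(\mathbf{B})$ denotes the set of $\mathcal{L}^*$-expansions of the finite structure $\mathbf{B}$ embeddable in $\mathbf{M}^*$, and for $f\in\mathrm{Emb}(\mathbf{B},\mathbf{M})$, $\mathbf{M}^*\cdot f$ is the unique $\mathbf{B}^*\in\mathbf{M}^*(\mathbf{B})$ with $f\in\mathrm{Emb}(\mathbf{B}^*,\mathbf{M}^*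 )$. A big Ramsey structure for $\mathbf{K}$ is an expansion $\mathbf{K}^*$ such that for every $\mathbf{A}\in\mathcal{K}$, $|\mathbf{K}^*(\mathbf{A})|=\mathrm{BRD}(\mathbf{A},\mathbf{K})$ and for every $g\in\mathrm{Emb}(\mathbf{K},\mathbf{K})$ the coloring $f\mapsto\mathbf{K}^*\cdot f$ takes all $|\mathbf{K}^*(\mathbf{A})|$ values on $g\circ\mathrm{Emb}(\mathbf{A},\mathbf{K})$. It is recurrent if $\mathrm{Emb}(\mathbf{K}^*,\mathbf{K}^*\cdot\eta)\ne\emptyset$ for every $\eta\in\mathrm{Emb}(\mathbf{K},\mathbf{K})$, where $\mathbf{K}^*\cdot\eta$ is the expansion of $\mathbf{K}$ pulled back along $\eta$. *)

theory Defs
  imports "HOL-Library.FuncSet" "HOL-Library.Countable_Set"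
begin

text \<open>A language is a set of relation symbols of type 'r together with a (global)
arity function ar. A structure has a universe and an interpretation of relations
on lists of elements.\<close>

record ('r, 'a) struc =
  univ :: "'a set"
  rel  :: "'r \<Rightarrow> 'a list \<Rightarrow> bool"

definition is_struc :: "('r \<Rightarrow> nat) \<Rightarrow> 'r set \<Rightarrow> ('r, 'a) struc \<Rightarrow> bool" where
  "is_struc ar L M \<longleftrightarrow>
     (\<forall>R xs. rel M R xs \<longrightarrow> R \<in> L \<and> length xs = ar R \<and> set xs \<subseteq> univ M)"

text \<open>Embeddings (extensional, so that sets of embeddings are honest sets).\<close>
definition emb :: "('r \<Rightarrow> nat) \<Rightarrow> 'r set \<Rightarrow> ('r, 'a) struc \<Rightarrow> ('r, 'b) struc \<Rightarrow> ('a \<Rightarrow> 'b) set" where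
  "emb ar L A B = {f. f \<in> extensional (univ A) \<and> f ` univ A \<subseteq> univ B \<and> inj_on f (univ A) \<and>
      (\<forall>R\<in>L. \<forall>xs. length xs = ar R \<and> set xs \<subseteq> univ A \<longrightarrow> (rel A R xs \<longleftrightarrow> rel B R (map f xs)))}"

definition reduct :: "'r set \<Rightarrow> ('r, 'a) struc \<Rightarrow> ('r, 'a) struc" where
  "reduct L M = M\<lparr>rel := (\<lambda>R xs. R \<in> L \<and> rel M R xs)\<rparr>"

definition is_expansion :: "('r \<Rightarrow> nat) \<Rightarrow> 'r set \<Rightarrow> 'r set \<Rightarrow> ('r, 'a) struc \<Rightarrow> ('r, 'a) struc \<Rightarrow> bool" where
  "is_expansion ar L Ls M Ms \<longleftrightarrow> L \<subseteq> Ls \<and> is_struc ar Ls Ms \<and> univ Ms = univ M \<and> reduct L Ms = M"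

definition isomorphic :: "('r \<Rightarrow> nat) \<Rightarrow> 'r set \<Rightarrow> ('r, 'a) struc \<Rightarrow> ('r, 'b) struc \<Rightarrow> bool" where
  "isomorphic ar L A B \<longleftrightarrow> (\<exists>f\<in>emb ar L A B. f ` univ A = univ B)"

definition age :: "('r \<Rightarrow> nat) \<Rightarrow> 'r set \<Rightarrow> ('r, 'a) struc \<Rightarrow> ('r, 'a) struc set" where
  "age ar L K = {A. is_struc ar L A \<and> finite (univ A) \<and> emb ar L A K \<noteq> {}}"

definition fraisse_class :: "('r \<Rightarrow> nat) \<Rightarrow> 'r set \<Rightarrow> ('r, 'a) struc set \<Rightarrow> bool" where
  "fraisse_class ar L C \<longleftrightarrow>
     (\<forall>A\<in>C. is_struc ar L A \<and> finite (univ A)) \<and>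
     (\<forall>A\<in>C. \<forall>B. is_struc ar L B \<and> isomorphic ar L A B \<longrightarrow> B \<in> C) \<and>
     (\<forall>A\<in>C. \<forall>B. is_struc ar L B \<and> finite (univ B) \<and> emb ar L B A \<noteq> {} \<longrightarrow> B \<in> C) \<and>
     (\<forall>A\<in>C. \<forall>B\<in>C. \<exists>D\<in>C. emb ar L A D \<noteq> {} \<and> emb ar L B D \<noteq> {}) \<and>
     (\<forall>A\<in>C. \<forall>B\<in>C. \<forall>D\<in>C. \<forall>f\<in>emb ar L A B. \<forall>g\<in>emb ar L A D.
        \<exists>E\<in>C. \<exists>f'\<in>emb ar L B E. \<exists>g'\<in>emb ar L D E. \<forall>x\<in>univ A. f' (f x) = g' (g x)) \<and>
     (\<exists>S\<subseteq>C. countable S \<and> (\<forall>A\<in>C. \<exists>B\<in>S. isomorphic ar L A B)) \<and>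
     (\<forall>n. \<exists>A\<in>C. n \<le> card (univ A))"

definition ultrahomogeneous :: "('r \<Rightarrow> nat) \<Rightarrow> 'r set \<Rightarrow> ('r, 'a) struc \<Rightarrow> bool" where
  "ultrahomogeneous ar L K \<longleftrightarrow>
     (\<forall>A\<in>age ar L K. \<forall>f\<in>emb ar L A K. \<forall>g\<in>emb ar L A K.
        \<exists>h\<in>emb ar L K K. h ` univ K = univ K \<and> (\<forall>x\<in>univ A. h (f x) = g x))"

definition is_flim :: "('r \<Rightarrow> nat) \<Rightarrow> 'r set \<Rightarrow> ('r, 'a) struc set \<Rightarrow> ('r, 'a) struc \<Rightarrow> bool" where
  "is_flim ar L C K \<longleftrightarrow> is_struc ar L K \<and> countable (univ K) \<and> ultrahomogeneous ar L K \<and> age ar L K = C"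

definition brd_witness :: "('r \<Rightarrow> nat) \<Rightarrow> 'r set \<Rightarrow> ('r, 'a) struc \<Rightarrow> ('r, 'b) struc \<Rightarrow> nat \<Rightarrow> bool" where
  "brd_witness ar L A K t \<longleftrightarrow>
     (\<forall>r>t. \<forall>\<chi> \<in> emb ar L A K \<rightarrow> {..<r}.
        \<exists>g\<in>emb ar L K K. card (\<chi> ` ((\<lambda>f. compose (univ A) g f) ` emb ar L A K)) \<le> t)"

definition BRD :: "('r \<Rightarrow> nat) \<Rightarrow> 'r set \<Rightarrow> ('r, 'a) struc \<Rightarrow> ('r, 'b) struc \<Rightarrow> nat" where
  "BRD ar L A K = (LEAST t. brd_witness ar L A K t)"

definition finite_BRDs :: "('r \<Rightarrow> nat) \<Rightarrow> 'r set \<Rightarrow> ('r, 'a) struc set \<Rightarrow> ('r, 'b) struc \<Rightarrow> bool" where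
  "finite_BRDs ar L C K \<longleftrightarrow> (\<forall>A\<in>C. \<exists>t. brd_witness ar L A K t)"

definition exp_age :: "('r \<Rightarrow> nat) \<Rightarrow> 'r set \<Rightarrow> 'r set \<Rightarrow> ('r, 'b) struc \<Rightarrow> ('r, 'a) struc \<Rightarrow> ('r, 'a) struc set" where
  "exp_age ar L Ls Ms B = {Bs. is_expansion ar L Ls B Bs \<and> emb ar Ls Bs Ms \<noteq> {}}"

text \<open>M*\<cdot>f for f \<in> Emb(B, M): the unique Bs in M*(B) with f \<in> Emb(Bs, M*).\<close>
definition dot :: "('r \<Rightarrow> nat) \<Rightarrow> 'r set \<Rightarrow> 'r set \<Rightarrow> ('r, 'b) struc \<Rightarrow> ('r, 'a) struc \<Rightarrow> ('a \<Rightarrow> 'b) \<Rightarrow> ('r, 'a) struc" where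
  "dot ar L Ls Ms B f = (THE Bs. Bs \<in> exp_age ar L Ls Ms B \<and> f \<in> emb ar Ls Bs Ms)"

definition big_ramsey_structure ::
  "('r \<Rightarrow> nat) \<Rightarrow> 'r set \<Rightarrow> 'r set \<Rightarrow> ('r, 'a) struc set \<Rightarrow> ('r, 'b) struc \<Rightarrow> ('r, 'b) struc \<Rightarrow> bool" where
  "big_ramsey_structure ar L Ls C K Ks \<longleftrightarrow>
     is_expansion ar L Ls K Ks \<and>
     (\<forall>A\<in>C. card (exp_age ar L Ls Ks A) = BRD ar L A K \<and>
        (\<forall>g\<in>emb ar L K K.
           card ((\<lambda>f. dot ar L Ls Ks A f) ` ((\<lambda>f. compose (univ A) g f) ` emb ar L A K))
             = card (exp_age ar L Ls Ks A)))"

definition pull :: "('r \<Rightarrow> nat) \<Rightarrow> 'r set \<Rightarrow> ('r, 'a) struc \<Rightarrow> ('a \<Rightarrow> 'a) \<Rightarrow> ('r, 'a) struc" where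
  "pull ar Ls Ms \<eta> = \<lparr>univ = univ Ms,
     rel = (\<lambda>R xs. R \<in> Ls \<and> length xs = ar R \<and> set xs \<subseteq> univ Ms \<and> rel Ms R (map \<eta> xs))\<rparr>"

definition recurrent :: "('r \<Rightarrow> nat) \<Rightarrow> 'r set \<Rightarrow> 'r set \<Rightarrow> ('r, 'a) struc \<Rightarrow> ('r, 'a) struc \<Rightarrow> bool" where
  "recurrent ar L Ls K Ks \<longleftrightarrow> (\<forall>\<eta>\<in>emb ar L K K. emb ar Ls Ks (pull ar Ls Ks \<eta>) \<noteq> {})"

datatype 'r qf = QTrue | QAtom 'r "nat list" | QEq nat nat | QNot "'r qf" | QAnd "'r qf" "'r qf"

fun sat :: "('r, 'a) struc \<Rightarrow> 'r qf \<Rightarrow> (nat \<Rightarrow> 'a) \<Rightarrow> bool" where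
  "sat M QTrue v = True"
| "sat M (QAtom R is) v = rel M R (map v is)"
| "sat M (QEq i j) v = (v i = v j)"
| "sat M (QNot \<phi>) v = (\<not> sat M \<phi> v)"
| "sat M (QAnd \<phi> \<psi>) v = (sat M \<phi> v \<and> sat M \<psi> v)"

fun wf_qf :: "('r \<Rightarrow> nat) \<Rightarrow> 'r set \<Rightarrow> nat \<Rightarrow> 'r qf \<Rightarrow> bool" where
  "wf_qf ar L n QTrue = True"
| "wf_qf ar L n (QAtom R is) = (R \<in> L \<and> length is = ar R \<and> (\<forall>i\<in>set is. i < n))"
| "wf_qf ar L n (QEq i j) = (i < n \<and> j < n)"
| "wf_qf ar L n (QNot \<phi>) = wf_qf ar L n \<phi>"
| "wf_qf ar L n (QAnd \<phi> \<psi>) = (wf_qf ar L n \<phi> \<and> wf_qf ar L n \<psi>)"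

definition qf_interprets :: "('r \<Rightarrow> nat) \<Rightarrow> 'r set \<Rightarrow> ('r, 'a) struc \<Rightarrow> 'r set \<Rightarrow> ('r, 'a) struc \<Rightarrow> bool" where
  "qf_interprets ar L1 M1 L2 M2 \<longleftrightarrow>
     (\<forall>R\<in>L2. \<exists>\<phi>. wf_qf ar L1 (ar R) \<phi> \<and>
        (\<forall>xs. length xs = ar R \<and> set xs \<subseteq> univ M2 \<longrightarrow> (rel M2 R xs \<longleftrightarrow> sat M1 \<phi> (\<lambda>i. xs ! i))))"

definition bi_interpretable :: "('r \<Rightarrow> nat) \<Rightarrow> 'r set \<Rightarrow> ('r, 'a) struc \<Rightarrow> 'r set \<Rightarrow> ('r, 'a) struc \<Rightarrow> bool" where
  "bi_interpretable ar L1 M1 L2 M2 \<longleftrightarrow>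
     univ M1 = univ M2 \<and> qf_interprets ar L1 M1 L2 M2 \<and> qf_interprets ar L2 M2 L1 M1"

end

theory Submission
  imports Defs
begin

text \<open>Colour each copy f of a finite A in K by the pair of expansions (K*.f, K'.f). As A has
  big Ramsey degree t and each coordinate alone takes exactly t values on every copy of K, some
  copy g of K carries at most t pairs, so on g the two colourings determine each other. Doing
  this for representatives of the finitely many quantifier-free L-types of tuples whose length is
  an arity of L* or L', and composing g with a recurrence witness h of K* (so that pulling K*
  back along g h returns K*), the L*-type of a tuple in K* and its L'-type in K' pulled back
  along g h determine each other. In a finite relational language this is quantifier-free
  bi-interpretability.\<close>

lemma struc_eqI: "univ A = univ B \<Longrightarrow> rel A = rel B \<Longrightarrow> A = (B :: ('r, 'a) struc)"
  by (cases A, cases B) simp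

lemma embD:
  assumes "f \<in> emb ar L A B"
  shows "f \<in> extensional (univ A)" "f ` univ A \<subseteq> univ B" "inj_on f (univ A)"
    "\<And>R xs. R \<in> L \<Longrightarrow> length xs = ar R \<Longrightarrow> set xs \<subseteq> univ A \<Longrightarrow> rel A R xs \<longleftrightarrow> rel B R (map f xs)"
  using assms unfolding emb_def by auto

lemma map_compose: "set xs \<subseteq> U \<Longrightarrow> map (compose U g f) xs = map g (map f xs)"
  by (auto simp: compose_def)

lemma emb_compose:
  assumes f: "f \<in> emb ar L A B" and g: "g \<in> emb ar L B D"
  shows "compose (univ A) g f \<in> emb ar L A D"
proof -
  note F = embD[OF f] and G = embD[OF g]
  have "inj_on (compose (univ A) g f) (univ A)"
    using comp_inj_on[OF F(3) inj_on_subset[OF G(3) F(2)]] by (simp add: compose_def inj_on_def)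
  moreover have "rel A R xs \<longleftrightarrow> rel D R (map (compose (univ A) g f) xs)"
    if "R \<in> L" "length xs = ar R" "set xs \<subseteq> univ A" for R xs
  proof -
    have "set (map f xs) \<subseteq> univ B" using that(3) F(2) by auto
    then show ?thesis using F(4)[OF that] G(4)[OF that(1)] that by (simp add: map_compose)
  qed
  ultimately show ?thesis
    using F(2) G(2) unfolding emb_def by (auto simp: compose_def image_subset_iff)
qed

lemma emb_restrict_id: "restrict id (univ A) \<in> emb ar L A A"
proof -
  have "map (restrict id (univ A)) xs = xs" if "set xs \<subseteq> univ A" for xs
    using that by (induction xs) auto
  then show ?thesis unfolding emb_def by (auto simp: inj_on_def)
qed

lemma compose_restrict_id_emb:
  "f \<in> emb ar L A K \<Longrightarrow> compose (univ A) (restrict id (univ K)) f = f"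
  by (rule extensionalityI[of _ "univ A"]) (auto simp: compose_def dest: embD)

lemma compose_emb_assoc:
  "f \<in> emb ar L A K \<Longrightarrow>
    compose (univ A) (compose (univ K) g h) f = compose (univ A) g (compose (univ A) h f)"
  by (rule compose_assoc[symmetric]) (auto dest: embD)

section \<open>Atomic types\<close>

definition qf_atoms :: "('r \<Rightarrow> nat) \<Rightarrow> 'r set \<Rightarrow> nat \<Rightarrow> 'r qf set" where
  "qf_atoms ar Lx n =
     (\<lambda>(R, is). QAtom R is) ` (SIGMA R:Lx. {is. set is \<subseteq> {..<n} \<and> length is = ar R}) \<union>
     (\<lambda>(i, j). QEq i j) ` ({..<n} \<times> {..<n})"

lemma finite_qf_atoms: "finite Lx \<Longrightarrow> finite (qf_atoms ar Lx n)"
  unfolding qf_atoms_def by (auto intro!: finite_SigmaI finite_lists_length_eq)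

lemma QAtom_in_qf_atoms:
  "R \<in> Lx \<Longrightarrow> length is = ar R \<Longrightarrow> set is \<subseteq> {..<n} \<Longrightarrow> QAtom R is \<in> qf_atoms ar Lx n"
  unfolding qf_atoms_def by force

lemma QEq_in_qf_atoms: "i < n \<Longrightarrow> j < n \<Longrightarrow> QEq i j \<in> qf_atoms ar Lx n"
  unfolding qf_atoms_def by force

lemma qf_atomsE:
  assumes "a \<in> qf_atoms ar Lx n"
  obtains R "is" where "a = QAtom R is" "R \<in> Lx" "length is = ar R" "set is \<subseteq> {..<n}"
  | i j where "a = QEq i j" "i < n" "j < n"
  using assms unfolding qf_atoms_def by auto

lemma wf_qf_atoms: "a \<in> qf_atoms ar Lx n \<Longrightarrow> wf_qf ar Lx n a"
  by (auto simp: qf_atoms_def)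

definition atomic_type :: "('r \<Rightarrow> nat) \<Rightarrow> 'r set \<Rightarrow> ('r, 'a) struc \<Rightarrow> 'a list \<Rightarrow> nat \<times> 'r qf set" where
  "atomic_type ar Lx M xs = (length xs, {a \<in> qf_atoms ar Lx (length xs). sat M a (\<lambda>i. xs ! i)})"

lemma atomic_type_eqI:
  assumes "length xs = length ys"
    and "\<And>a. a \<in> qf_atoms ar Lx (length xs) \<Longrightarrow> sat M a (\<lambda>i. xs ! i) \<longleftrightarrow> sat N a (\<lambda>i. ys ! i)"
  shows "atomic_type ar Lx M xs = atomic_type ar Lx N ys"
  using assms unfolding atomic_type_def by auto

lemma atomic_type_eq_length:
  "atomic_type ar Lx M xs = atomic_type ar Lx N ys \<Longrightarrow> length xs = length ys"
  by (simp add: atomic_type_def)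

lemma atomic_type_eq_sat_iff:
  assumes "atomic_type ar Lx M xs = atomic_type ar Lx N ys" "a \<in> qf_atoms ar Lx (length xs)"
  shows "sat M a (\<lambda>i. xs ! i) \<longleftrightarrow> sat N a (\<lambda>i. ys ! i)"
proof -
  have "{a \<in> qf_atoms ar Lx (length xs). sat M a (\<lambda>i. xs ! i)} =
      {a \<in> qf_atoms ar Lx (length xs). sat N a (\<lambda>i. ys ! i)}"
    using assms(1) atomic_type_eq_length[OF assms(1)] unfolding atomic_type_def by simp
  then show ?thesis using assms(2) by blast
qed

lemma atomic_type_eq_nth_iff:
  assumes "atomic_type ar Lx M xs = atomic_type ar Lx N ys" "i < length xs" "j < length xs"
  shows "xs ! i = xs ! j \<longleftrightarrow> ys ! i = ys ! j"
  using atomic_type_eq_sat_iff[OF assms(1) QEq_in_qf_atoms[OF assms(2,3)]] by simp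

lemma atomic_type_eq_rel_iff:
  assumes "atomic_type ar Lx M xs = atomic_type ar Lx N ys"
    and "R \<in> Lx" "length is = ar R" "set is \<subseteq> {..<length xs}"
  shows "rel M R (map (\<lambda>i. xs ! i) is) \<longleftrightarrow> rel N R (map (\<lambda>i. ys ! i) is)"
  using atomic_type_eq_sat_iff[OF assms(1) QAtom_in_qf_atoms[where ar = ar, OF assms(2-)]] by simp

lemma rel_eq_if_atomic_type_eq:
  assumes "atomic_type ar Lx M xs = atomic_type ar Lx N ys" "R \<in> Lx" "length xs = ar R"
  shows "rel M R xs \<longleftrightarrow> rel N R ys"
proof -
  have len: "length ys = ar R" using assms(3) atomic_type_eq_length[OF assms(1)] by simp
  have "rel M R (map (\<lambda>i. xs ! i) [0..<ar R]) \<longleftrightarrow> rel N R (map (\<lambda>i. ys ! i) [0..<ar R])"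
    by (rule atomic_type_eq_rel_iff[OF assms(1,2)]) (use assms(3) in auto)
  then show ?thesis using assms(3) len map_nth by metis
qed

lemma finite_atomic_types:
  assumes "finite Lx" "finite N"
  shows "finite (atomic_type ar Lx M ` {xs. length xs \<in> N})"
proof (rule finite_subset)
  show "atomic_type ar Lx M ` {xs. length xs \<in> N} \<subseteq> (SIGMA n:N. Pow (qf_atoms ar Lx n))"
    by (auto simp: atomic_type_def)
  show "finite (SIGMA n:N. Pow (qf_atoms ar Lx n))"
    using assms by (simp add: finite_qf_atoms)
qed

lemma atomic_type_emb:
  assumes f: "f \<in> emb ar Lx A B" and xs: "set xs \<subseteq> univ A"
  shows "atomic_type ar Lx B (map f xs) = atomic_type ar Lx A xs"
proof (rule atomic_type_eqI)
  note F = embD[OF f]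
  fix a assume "a \<in> qf_atoms ar Lx (length (map f xs))"
  then show "sat B a (\<lambda>i. map f xs ! i) \<longleftrightarrow> sat A a (\<lambda>i. xs ! i)"
  proof (cases rule: qf_atomsE)
    case (1 R "is")
    have "map (\<lambda>i. map f xs ! i) is = map f (map (\<lambda>i. xs ! i) is)" using 1 by auto
    moreover have "rel A R (map (\<lambda>i. xs ! i) is) \<longleftrightarrow> rel B R (map f (map (\<lambda>i. xs ! i) is))"
      by (rule F(4)) (use 1 xs nth_mem in fastforce)+
    ultimately show ?thesis using 1 by (simp del: map_map)
  next
    case (2 i j)
    then show ?thesis using F(3) xs nth_mem by (simp add: inj_on_eq_iff subset_iff)
  qed
qed simp

lemma ex_indices_map_nth:
  "set ws \<subseteq> set zs \<Longrightarrow> \<exists>is. set is \<subseteq> {..<length zs} \<and> ws = map (\<lambda>i. zs ! i) is"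
proof (induction ws)
  case (Cons w ws)
  then obtain "is" i where "set is \<subseteq> {..<length zs}" "ws = map (\<lambda>i. zs ! i) is"
    "i < length zs" "w = zs ! i"
    by (auto simp: in_set_conv_nth)
  then show ?case by (intro exI[of _ "i # is"]) auto
qed simp

lemma emb_if_atomic_type_eq:
  assumes "f \<in> extensional (univ A)" "f ` univ A \<subseteq> univ B" "univ A = set zs"
    and type: "atomic_type ar Lx B (map f zs) = atomic_type ar Lx A zs"
  shows "f \<in> emb ar Lx A B"
proof -
  have "inj_on f (univ A)"
  proof (rule inj_onI)
    fix z z' assume z: "z \<in> univ A" "z' \<in> univ A" "f z = f z'"
    obtain i j where ij: "i < length zs" "j < length zs" "z = zs ! i" "z' = zs ! j"
      using z(1,2) assms(3) by (metis in_set_conv_nth)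
    then have "map f zs ! i = map f zs ! j" using z(3) by simp
    then show "z = z'" using atomic_type_eq_nth_iff[OF type] ij by simp
  qed
  moreover have "rel A R ws \<longleftrightarrow> rel B R (map f ws)"
    if R: "R \<in> Lx" and ws: "length ws = ar R" "set ws \<subseteq> univ A" for R ws
  proof -
    obtain "is" where "is": "set is \<subseteq> {..<length zs}" "ws = map (\<lambda>i. zs ! i) is"
      using ex_indices_map_nth[OF ws(2)[unfolded assms(3)]] by blast
    then have "map f ws = map (\<lambda>i. map f zs ! i) is" by (auto simp: subset_iff)
    then show ?thesis
      using atomic_type_eq_rel_iff[OF type R, of "is"] "is" ws(1) by (simp del: map_map)
  qed
  ultimately show ?thesis using assms(1,2) unfolding emb_def by simp
qed

lemma struc_eq_iff_atomic_type_eq: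
  assumes "is_struc ar Lx A" "is_struc ar Lx B" "univ A = set zs" "univ B = set zs"
  shows "A = B \<longleftrightarrow> atomic_type ar Lx A zs = atomic_type ar Lx B zs"
proof
  assume type: "atomic_type ar Lx A zs = atomic_type ar Lx B zs"
  have "rel A R ws \<longleftrightarrow> rel B R ws" for R ws
  proof (cases "R \<in> Lx \<and> length ws = ar R \<and> set ws \<subseteq> set zs")
    case True
    then obtain "is" where "is": "set is \<subseteq> {..<length zs}" "ws = map (\<lambda>i. zs ! i) is"
      using ex_indices_map_nth by meson
    have "length is = ar R" using True "is"(2) by simp
    then show ?thesis using atomic_type_eq_rel_iff[OF type _ _ "is"(1)] True "is"(2) by simp
  next
    case False
    have "rel A R ws \<longrightarrow> R \<in> Lx \<and> length ws = ar R \<and> set ws \<subseteq> set zs"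
      "rel B R ws \<longrightarrow> R \<in> Lx \<and> length ws = ar R \<and> set ws \<subseteq> set zs"
      using assms unfolding is_struc_def by simp_all
    then show ?thesis using False by blast
  qed
  then have "rel A = rel B" by (simp add: fun_eq_iff)
  then show "A = B" using assms(3,4) by (simp add: struc_eqI)
next
  assume "A = B"
  then show "atomic_type ar Lx A zs = atomic_type ar Lx B zs" by (rule arg_cong)
qed

definition pullback :: "('r \<Rightarrow> nat) \<Rightarrow> 'r set \<Rightarrow> ('r, 'b) struc \<Rightarrow> ('a \<Rightarrow> 'b) \<Rightarrow> 'a set \<Rightarrow> ('r, 'a) struc" where
  "pullback ar Lx M f S =
     \<lparr>univ = S, rel = (\<lambda>R xs. R \<in> Lx \<and> length xs = ar R \<and> set xs \<subseteq> S \<and> rel M R (map f xs))\<rparr>"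

lemma univ_pullback [simp]: "univ (pullback ar Lx M f S) = S"
  by (simp add: pullback_def)

lemma is_struc_pullback: "is_struc ar Lx (pullback ar Lx M f S)"
  by (simp add: is_struc_def pullback_def)

lemma pull_eq_pullback: "pull ar Lx M f = pullback ar Lx M f (univ M)"
  by (simp add: pull_def pullback_def)

lemma emb_pullback:
  "f \<in> extensional S \<Longrightarrow> f ` S \<subseteq> univ M \<Longrightarrow> inj_on f S \<Longrightarrow> f \<in> emb ar Lx (pullback ar Lx M f S) M"
  by (auto simp: emb_def pullback_def)

lemma pullback_emb:
  assumes "is_struc ar Lx B" "f \<in> emb ar Lx B M"
  shows "pullback ar Lx M f (univ B) = B"
proof (rule struc_eqI)
  have "rel B R xs \<longleftrightarrow> R \<in> Lx \<and> length xs = ar R \<and> set xs \<subseteq> univ B \<and> rel M R (map f xs)"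
    for R xs
  proof (cases "R \<in> Lx \<and> length xs = ar R \<and> set xs \<subseteq> univ B")
    case True
    then show ?thesis using embD(4)[OF assms(2)] by simp
  next
    case False
    then show ?thesis using assms(1) unfolding is_struc_def by blast
  qed
  then show "rel (pullback ar Lx M f (univ B)) = rel B"
    by (simp add: pullback_def fun_eq_iff)
qed simp

lemma reduct_pullback:
  "L \<subseteq> Lx \<Longrightarrow> reduct L (pullback ar Lx M f S) = pullback ar L (reduct L M) f S"
  by (auto simp: reduct_def pullback_def fun_eq_iff)

lemma emb_reduct: "f \<in> emb ar Lx M N \<Longrightarrow> L \<subseteq> Lx \<Longrightarrow> f \<in> emb ar L (reduct L M) (reduct L N)"
  by (auto simp: emb_def reduct_def)

lemma expansionD:
  assumes "is_expansion ar L Lx K M"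
  shows "L \<subseteq> Lx" "is_struc ar Lx M" "univ M = univ K" "reduct L M = K"
  using assms unfolding is_expansion_def by auto

lemma rel_expansion:
  assumes "is_expansion ar L Lx K M"
  shows "rel K R xs \<longleftrightarrow> R \<in> L \<and> rel M R xs"
  using arg_cong[OF expansionD(4)[OF assms], of rel] unfolding reduct_def by (auto simp: fun_eq_iff)

lemma atomic_type_expansion:
  assumes "is_expansion ar L Lx K M" "atomic_type ar Lx M xs = atomic_type ar Lx M ys"
  shows "atomic_type ar L K xs = atomic_type ar L K ys"
proof (rule atomic_type_eqI)
  fix a assume "a \<in> qf_atoms ar L (length xs)"
  then show "sat K a (\<lambda>i. xs ! i) \<longleftrightarrow> sat K a (\<lambda>i. ys ! i)"
  proof (cases rule: qf_atomsE)
    case (1 R "is")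
    then show ?thesis
      using atomic_type_eq_rel_iff[OF assms(2), of R "is"] expansionD(1)[OF assms(1)]
      by (auto simp: rel_expansion[OF assms(1)])
  next
    case (2 i j)
    then show ?thesis using atomic_type_eq_nth_iff[OF assms(2)] by simp
  qed
qed (rule atomic_type_eq_length[OF assms(2)])

lemma expansion_pullback:
  assumes "is_struc ar L A" "f \<in> emb ar L A K" "is_expansion ar L Lx K M"
  shows "is_expansion ar L Lx A (pullback ar Lx M f (univ A))"
  using expansionD[OF assms(3)] pullback_emb[OF assms(1,2)]
  by (simp add: is_expansion_def is_struc_pullback reduct_pullback)

lemma dot_expansion_emb:
  assumes A: "is_struc ar L A" and f: "f \<in> emb ar L A K" and E: "is_expansion ar L Lx K M"
  shows "is_expansion ar L Lx A (dot ar L Lx M A f) \<and> f \<in> emb ar Lx (dot ar L Lx M A f) M"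
proof -
  let ?P = "\<lambda>B. B \<in> exp_age ar L Lx M A \<and> f \<in> emb ar Lx B M"
  have "f \<in> emb ar Lx (pullback ar Lx M f (univ A)) M"
    using embD[OF f] expansionD(3)[OF E] by (intro emb_pullback) auto
  then have "?P (pullback ar Lx M f (univ A))"
    using expansion_pullback[OF assms] by (auto simp: exp_age_def)
  moreover have "B = pullback ar Lx M f (univ A)" if "?P B" for B
    using that pullback_emb[of ar Lx B f M] unfolding exp_age_def is_expansion_def by auto
  ultimately have "?P (dot ar L Lx M A f)"
    unfolding dot_def by (rule theI)
  then show ?thesis by (simp add: exp_age_def)
qed

lemma dot_eq_iff_atomic_type_eq:
  assumes A: "is_struc ar L A" "univ A = set zs" and E: "is_expansion ar L Lx K M"
    and f: "f \<in> emb ar L A K" and f': "f' \<in> emb ar L A K"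
  shows "dot ar L Lx M A f = dot ar L Lx M A f' \<longleftrightarrow>
    atomic_type ar Lx M (map f zs) = atomic_type ar Lx M (map f' zs)"
proof -
  note B = dot_expansion_emb[OF A(1) f E] and B' = dot_expansion_emb[OF A(1) f' E]
  have "dot ar L Lx M A f = dot ar L Lx M A f' \<longleftrightarrow>
      atomic_type ar Lx (dot ar L Lx M A f) zs = atomic_type ar Lx (dot ar L Lx M A f') zs"
    using B B' A(2) by (intro struc_eq_iff_atomic_type_eq) (auto simp: is_expansion_def)
  also have "\<dots> \<longleftrightarrow> atomic_type ar Lx M (map f zs) = atomic_type ar Lx M (map f' zs)"
  proof -
    have "set zs \<subseteq> univ (dot ar L Lx M A f)" "set zs \<subseteq> univ (dot ar L Lx M A f')"
      using B B' A(2) by (simp_all add: is_expansion_def)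
    then show ?thesis using atomic_type_emb B B' by metis
  qed
  finally show ?thesis .
qed

section \<open>Quantifier-free definability\<close>

fun qf_conj :: "'r qf list \<Rightarrow> 'r qf" where
  "qf_conj [] = QTrue"
| "qf_conj (\<phi> # \<phi>s) = QAnd \<phi> (qf_conj \<phi>s)"

definition qf_disj :: "'r qf list \<Rightarrow> 'r qf" where
  "qf_disj \<phi>s = QNot (qf_conj (map QNot \<phi>s))"

lemma sat_qf_conj [simp]: "sat M (qf_conj \<phi>s) v \<longleftrightarrow> (\<forall>\<phi>\<in>set \<phi>s. sat M \<phi> v)"
  by (induction \<phi>s) auto

lemma sat_qf_disj [simp]: "sat M (qf_disj \<phi>s) v \<longleftrightarrow> (\<exists>\<phi>\<in>set \<phi>s. sat M \<phi> v)"
  by (simp add: qf_disj_def)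

lemma wf_qf_conj [simp]: "wf_qf ar Lx n (qf_conj \<phi>s) \<longleftrightarrow> (\<forall>\<phi>\<in>set \<phi>s. wf_qf ar Lx n \<phi>)"
  by (induction \<phi>s) auto

lemma wf_qf_disj [simp]: "wf_qf ar Lx n (qf_disj \<phi>s) \<longleftrightarrow> (\<forall>\<phi>\<in>set \<phi>s. wf_qf ar Lx n \<phi>)"
  by (simp add: qf_disj_def)

lemma qf_definable_if_atomic_type_invariant:
  assumes "finite Lx"
    and invariant: "\<And>xs ys. length xs = n \<Longrightarrow> length ys = n \<Longrightarrow> set xs \<subseteq> U \<Longrightarrow> set ys \<subseteq> U \<Longrightarrow>
      atomic_type ar Lx M xs = atomic_type ar Lx M ys \<Longrightarrow> P xs \<longleftrightarrow> P ys"
  shows "\<exists>\<phi>. wf_qf ar Lx n \<phi> \<and> (\<forall>xs. length xs = n \<and> set xs \<subseteq> U \<longrightarrow> (P xs \<longleftrightarrow> sat M \<phi> (\<lambda>i. xs ! i)))"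
proof -
  obtain atoms where atoms: "set atoms = qf_atoms ar Lx n"
    using finite_list[OF finite_qf_atoms[OF assms(1)]] by blast
  define type_formula where
    "type_formula \<sigma> = qf_conj (map (\<lambda>a. if a \<in> \<sigma> then a else QNot a) atoms)" for \<sigma>
  have wf_type_formula: "wf_qf ar Lx n (type_formula \<sigma>)" for \<sigma>
    using wf_qf_atoms atoms by (auto simp: type_formula_def)
  have sat_type_formula: "sat M (type_formula (snd \<tau>)) (\<lambda>i. xs ! i) \<longleftrightarrow> atomic_type ar Lx M xs = \<tau>"
    if "length xs = n" "\<tau> = (n, \<sigma>)" "\<sigma> \<subseteq> qf_atoms ar Lx n" for xs \<tau> \<sigma>
  proof -
    have "sat M (type_formula \<sigma>) (\<lambda>i. xs ! i) \<longleftrightarrow>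
        (\<forall>a\<in>set atoms. sat M (if a \<in> \<sigma> then a else QNot a) (\<lambda>i. xs ! i))"
      unfolding type_formula_def by (induction atoms) auto
    also have "\<dots> \<longleftrightarrow> (\<forall>a\<in>qf_atoms ar Lx n. sat M a (\<lambda>i. xs ! i) \<longleftrightarrow> a \<in> \<sigma>)"
      unfolding atoms by (intro ball_cong refl) auto
    also have "\<dots> \<longleftrightarrow> {a \<in> qf_atoms ar Lx n. sat M a (\<lambda>i. xs ! i)} = \<sigma>"
      using that(3) by blast
    finally show ?thesis using that(1,2) by (auto simp: atomic_type_def)
  qed
  define types where "types = atomic_type ar Lx M ` {xs. length xs = n \<and> set xs \<subseteq> U \<and> P xs}"
  have "finite types"
    using finite_atomic_types[OF assms(1), of "{n}" ar M]
    by (rule finite_subset[rotated]) (auto simp: types_def)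
  then obtain ts where ts: "set ts = types" using finite_list by blast
  have types_shape: "\<tau> = (n, snd \<tau>) \<and> snd \<tau> \<subseteq> qf_atoms ar Lx n" if "\<tau> \<in> types" for \<tau>
    using that by (auto simp: types_def atomic_type_def)
  show ?thesis
  proof (intro exI conjI allI impI)
    show "wf_qf ar Lx n (qf_disj (map (type_formula \<circ> snd) ts))"
      by (simp add: wf_type_formula)
    fix xs assume xs: "length xs = n \<and> set xs \<subseteq> U"
    have "sat M (qf_disj (map (type_formula \<circ> snd) ts)) (\<lambda>i. xs ! i) \<longleftrightarrow> atomic_type ar Lx M xs \<in> types"
      using sat_type_formula[OF conjunct1[OF xs]] types_shape by (auto simp: ts)
    also have "\<dots> \<longleftrightarrow> P xs"
      using invariant xs by (auto simp: types_def)
    finally show "P xs \<longleftrightarrow> sat M (qf_disj (map (type_formula \<circ> snd) ts)) (\<lambda>i. xs ! i)" by simp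
  qed
qed

lemma qf_interpretsI:
  assumes "finite L1"
    and "\<And>xs ys. length xs \<in> ar ` L2 \<Longrightarrow> length ys = length xs \<Longrightarrow>
      set xs \<subseteq> univ M2 \<Longrightarrow> set ys \<subseteq> univ M2 \<Longrightarrow>
      atomic_type ar L1 M1 xs = atomic_type ar L1 M1 ys \<Longrightarrow> atomic_type ar L2 M2 xs = atomic_type ar L2 M2 ys"
  shows "qf_interprets ar L1 M1 L2 M2"
  unfolding qf_interprets_def
proof
  fix R assume R: "R \<in> L2"
  show "\<exists>\<phi>. wf_qf ar L1 (ar R) \<phi> \<and>
      (\<forall>xs. length xs = ar R \<and> set xs \<subseteq> univ M2 \<longrightarrow> (rel M2 R xs \<longleftrightarrow> sat M1 \<phi> (\<lambda>i. xs ! i)))"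
  proof (rule qf_definable_if_atomic_type_invariant[OF assms(1)])
    fix xs ys assume len: "length xs = ar R" "length ys = ar R"
      and "set xs \<subseteq> univ M2" "set ys \<subseteq> univ M2" "atomic_type ar L1 M1 xs = atomic_type ar L1 M1 ys"
    then have "atomic_type ar L2 M2 xs = atomic_type ar L2 M2 ys"
      using R by (intro assms(2)) simp_all
    then show "rel M2 R xs \<longleftrightarrow> rel M2 R ys"
      using R len(1) by (rule rel_eq_if_atomic_type_eq)
  qed
qed

lemma bi_interpretableI:
  assumes "finite L1" "finite L2" "univ M1 = univ M2"
    and "\<And>xs ys. length xs \<in> ar ` (L1 \<union> L2) \<Longrightarrow> length ys = length xs \<Longrightarrow>
      set xs \<subseteq> univ M1 \<Longrightarrow> set ys \<subseteq> univ M1 \<Longrightarrow>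
      atomic_type ar L1 M1 xs = atomic_type ar L1 M1 ys \<longleftrightarrow> atomic_type ar L2 M2 xs = atomic_type ar L2 M2 ys"
  shows "bi_interpretable ar L1 M1 L2 M2"
proof -
  have "qf_interprets ar L1 M1 L2 M2"
    by (rule qf_interpretsI[OF assms(1)]) (use assms(3,4) in auto)
  moreover have "qf_interprets ar L2 M2 L1 M1"
    by (rule qf_interpretsI[OF assms(2)]) (use assms(3,4) in auto)
  ultimately show ?thesis unfolding bi_interpretable_def using assms(3) by simp
qed

section \<open>Colourings of copies\<close>

abbreviation embs_through ::
  "('r \<Rightarrow> nat) \<Rightarrow> 'r set \<Rightarrow> ('r, 'a) struc \<Rightarrow> ('r, 'b) struc \<Rightarrow> ('b \<Rightarrow> 'b) \<Rightarrow> ('a \<Rightarrow> 'b) set" where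
  "embs_through ar L A K g \<equiv> (\<lambda>f. compose (univ A) g f) ` emb ar L A K"

lemma embs_through_restrict_id: "embs_through ar L A K (restrict id (univ K)) = emb ar L A K"
  by (simp add: compose_restrict_id_emb cong: image_cong)

lemma embs_through_compose:
  "embs_through ar L A K (compose (univ K) g h) = compose (univ A) g ` embs_through ar L A K h"
  by (simp add: image_image compose_emb_assoc cong: image_cong)

lemma embs_through_subset: "g \<in> emb ar L K K \<Longrightarrow> embs_through ar L A K g \<subseteq> emb ar L A K"
  using emb_compose by blast

lemma embs_through_compose_subset:
  "h \<in> emb ar L K K \<Longrightarrow> embs_through ar L A K (compose (univ K) g h) \<subseteq> embs_through ar L A K g"
  unfolding embs_through_compose by (intro image_mono embs_through_subset)

definition same_partition_on :: "('x \<Rightarrow> 'y) \<Rightarrow> ('x \<Rightarrow> 'z) \<Rightarrow> 'x set \<Rightarrow> bool" where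
  "same_partition_on c d S \<longleftrightarrow> (\<forall>x\<in>S. \<forall>y\<in>S. c x = c y \<longleftrightarrow> d x = d y)"

lemma same_partition_on_subset: "same_partition_on c d S \<Longrightarrow> T \<subseteq> S \<Longrightarrow> same_partition_on c d T"
  unfolding same_partition_on_def by blast

lemma same_partition_on_image: "same_partition_on c d (h ` S) \<longleftrightarrow> same_partition_on (c \<circ> h) (d \<circ> h) S"
  unfolding same_partition_on_def by simp

lemma same_partition_on_if_card_le:
  assumes fin: "finite ((\<lambda>x. (c x, d x)) ` S)"
    and "card ((\<lambda>x. (c x, d x)) ` S) \<le> card (c ` S)" "card ((\<lambda>x. (c x, d x)) ` S) \<le> card (d ` S)"
  shows "same_partition_on c d S"
proof -
  let ?Q = "(\<lambda>x. (c x, d x)) ` S"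
  have "fst ` ?Q = c ` S" "snd ` ?Q = d ` S" by (simp_all add: image_image)
  then have "card (fst ` ?Q) = card ?Q" "card (snd ` ?Q) = card ?Q"
    using assms(2,3) card_image_le[OF fin, of fst] card_image_le[OF fin, of snd] by simp_all
  then have inj: "inj_on fst ?Q" "inj_on snd ?Q" by (simp_all add: eq_card_imp_inj_on[OF fin])
  show ?thesis unfolding same_partition_on_def
  proof (intro ballI)
    fix x y assume "x \<in> S" "y \<in> S"
    then have Q: "(c x, d x) \<in> ?Q" "(c y, d y) \<in> ?Q" by auto
    show "c x = c y \<longleftrightarrow> d x = d y"
      using inj_onD[OF inj(1) _ Q] inj_onD[OF inj(2) _ Q] by auto
  qed
qed

lemma brd_witness_pos:
  assumes "brd_witness ar L A K t" "emb ar L A K \<noteq> {}"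
  shows "0 < t"
proof (rule ccontr)
  assume "\<not> 0 < t"
  then have "\<exists>g\<in>emb ar L K K. card ((\<lambda>_. 0::nat) ` embs_through ar L A K g) \<le> t"
    by (intro assms(1)[unfolded brd_witness_def, rule_format, of 1]) auto
  then obtain g where "card ((\<lambda>_. 0::nat) ` embs_through ar L A K g) = 0"
    using \<open>\<not> 0 < t\<close> by auto
  moreover have "(\<lambda>_. 0::nat) ` embs_through ar L A K g = {0}" using assms(2) by auto
  ultimately show False by simp
qed

text \<open>Colour by the pair of colours: on some copy at most t pairs occur, while each
  coordinate alone already takes t values there, so both projections are injective.\<close>
lemma brd_witness_same_partition:
  assumes brd: "brd_witness ar L A K t" and ne: "emb ar L A K \<noteq> {}"
    and c: "\<And>g. g \<in> emb ar L K K \<Longrightarrow> card (c ` embs_through ar L A K g) = t"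
    and d: "\<And>g. g \<in> emb ar L K K \<Longrightarrow> card (d ` embs_through ar L A K g) = t"
  shows "\<exists>g\<in>emb ar L K K. same_partition_on c d (embs_through ar L A K g)"
proof -
  let ?E = "emb ar L A K" and ?p = "\<lambda>f. (c f, d f)"
  have "0 < t" by (rule brd_witness_pos[OF brd ne])
  then have "finite (c ` ?E)" "finite (d ` ?E)"
    using c[OF emb_restrict_id] d[OF emb_restrict_id]
    by (simp_all add: embs_through_restrict_id card_ge_0_finite)
  then have fin: "finite (?p ` ?E)"
    by (rule finite_subset[rotated, OF finite_cartesian_product]) auto
  obtain idx where idx: "bij_betw idx (?p ` ?E) {0..<card (?p ` ?E)}"
    using ex_bij_betw_finite_nat[OF fin] by blast
  have "idx \<circ> ?p \<in> ?E \<rightarrow> {..<card (?p ` ?E) + t + 1}"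
    using bij_betwE[OF idx] by fastforce
  then have "\<exists>g\<in>emb ar L K K. card ((idx \<circ> ?p) ` embs_through ar L A K g) \<le> t"
    by (rule brd[unfolded brd_witness_def, rule_format, rotated]) simp
  then obtain g where g: "g \<in> emb ar L K K"
    and le: "card ((idx \<circ> ?p) ` embs_through ar L A K g) \<le> t" ..
  let ?S = "embs_through ar L A K g"
  have sub: "?p ` ?S \<subseteq> ?p ` ?E" using embs_through_subset[OF g] by (rule image_mono)
  then have "inj_on idx (?p ` ?S)"
    using bij_betw_imp_inj_on[OF idx] by (rule inj_on_subset[rotated])
  then have "card ((idx \<circ> ?p) ` ?S) = card (?p ` ?S)"
    unfolding image_comp[symmetric] by (rule card_image)
  then have "card (?p ` ?S) \<le> card (c ` ?S)" "card (?p ` ?S) \<le> card (d ` ?S)"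
    using le c[OF g] d[OF g] by simp_all
  then have "same_partition_on c d ?S"
    using finite_subset[OF sub fin] by (intro same_partition_on_if_card_le)
  then show ?thesis
    using g by blast
qed

lemma card_dot_embs_through:
  assumes "big_ramsey_structure ar L Lx C K M" "A \<in> C" "g \<in> emb ar L K K"
  shows "card (dot ar L Lx M A ` embs_through ar L A K g) = BRD ar L A K"
  using assms unfolding big_ramsey_structure_def by simp

definition induced_substruc :: "('r \<Rightarrow> nat) \<Rightarrow> 'r set \<Rightarrow> ('r, 'a) struc \<Rightarrow> 'a set \<Rightarrow> ('r, 'a) struc" where
  "induced_substruc ar L K S = pullback ar L K (restrict id S) S"

lemma emb_induced_substruc: "S \<subseteq> univ K \<Longrightarrow> restrict id S \<in> emb ar L (induced_substruc ar L K S) K"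
  unfolding induced_substruc_def by (rule emb_pullback) auto

lemma induced_substruc_in_age:
  assumes "finite S" "S \<subseteq> univ K"
  shows "induced_substruc ar L K S \<in> age ar L K"
  using assms emb_induced_substruc[OF assms(2)] by (auto simp: age_def induced_substruc_def is_struc_pullback)

text \<open>The choice of index is irrelevant as soon as xs repeats entries wherever zs does.\<close>
definition relabel :: "'a list \<Rightarrow> 'b list \<Rightarrow> 'a \<Rightarrow> 'b" where
  "relabel zs xs = restrict (\<lambda>z. xs ! (SOME i. i < length zs \<and> zs ! i = z)) (set zs)"

lemma map_relabel:
  assumes "length zs = length xs"
    and "\<And>i j. i < length zs \<Longrightarrow> j < length zs \<Longrightarrow> zs ! i = zs ! j \<Longrightarrow> xs ! i = xs ! j"
  shows "map (relabel zs xs) zs = xs"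
proof (rule nth_equalityI)
  fix i assume i: "i < length (map (relabel zs xs) zs)"
  define j where "j = (SOME j. j < length zs \<and> zs ! j = zs ! i)"
  have "j < length zs \<and> zs ! j = zs ! i"
    unfolding j_def by (rule someI[of _ i]) (use i in simp)
  then show "map (relabel zs xs) zs ! i = xs ! i"
    using i assms(2)[of j i] by (simp add: relabel_def j_def[symmetric])
qed (simp add: assms(1))

lemma emb_relabel:
  assumes "set zs \<subseteq> univ K" "set xs \<subseteq> univ K"
    and type: "atomic_type ar L K zs = atomic_type ar L K xs"
  shows "relabel zs xs \<in> emb ar L (induced_substruc ar L K (set zs)) K"
proof (rule emb_if_atomic_type_eq)
  have "map (relabel zs xs) zs = xs"
    using atomic_type_eq_length[OF type] atomic_type_eq_nth_iff[OF type] by (blast intro: map_relabel)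
  moreover have "map (restrict id (set zs)) zs = zs" by (simp add: map_idI)
  ultimately show "atomic_type ar L K (map (relabel zs xs) zs) = atomic_type ar L (induced_substruc ar L K (set zs)) zs"
    using type atomic_type_emb[OF emb_induced_substruc[OF assms(1)], of zs] by (simp add: induced_substruc_def)
  show "relabel zs xs ` univ (induced_substruc ar L K (set zs)) \<subseteq> univ K"
    using \<open>map (relabel zs xs) zs = xs\<close> assms(2) by (simp add: induced_substruc_def flip: set_map)
qed (simp_all add: relabel_def induced_substruc_def)

lemma emb_pull_expansion:
  assumes "is_expansion ar L Lx K M" "g \<in> emb ar L K K"
  shows "g \<in> emb ar Lx (pull ar Lx M g) M"
  unfolding pull_eq_pullback using embD[OF assms(2)] expansionD(3)[OF assms(1)]
  by (intro emb_pullback) auto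

lemma emb_recurrence_witness:
  assumes K: "is_struc ar L K" and E: "is_expansion ar L Lx K M" and g: "g \<in> emb ar L K K"
    and h: "h \<in> emb ar Lx M (pull ar Lx M g)"
  shows "h \<in> emb ar L K K"
proof -
  have "reduct L (pull ar Lx M g) = K"
    using expansionD[OF E] pullback_emb[OF K g] by (simp add: pull_eq_pullback reduct_pullback)
  then show ?thesis using emb_reduct[OF h expansionD(1)[OF E]] expansionD(4)[OF E] by simp
qed

lemma atomic_type_recurrence_witness:
  assumes E: "is_expansion ar L Lx K M" and g: "g \<in> emb ar L K K"
    and h: "h \<in> emb ar Lx M (pull ar Lx M g)" and xs: "set xs \<subseteq> univ K"
  shows "atomic_type ar Lx M (map (compose (univ K) g h) xs) = atomic_type ar Lx M xs"
proof -
  have uM: "univ M = univ K" and "univ (pull ar Lx M g) = univ K"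
    using expansionD(3)[OF E] by (simp_all add: pull_def)
  then have "set (map h xs) \<subseteq> univ (pull ar Lx M g)" using embD(2)[OF h] xs by (auto simp: image_subset_iff)
  then have "atomic_type ar Lx M (map g (map h xs)) = atomic_type ar Lx (pull ar Lx M g) (map h xs)"
    by (rule atomic_type_emb[OF emb_pull_expansion[OF E g]])
  also have "\<dots> = atomic_type ar Lx M xs" using atomic_type_emb[OF h] xs uM by simp
  finally show ?thesis using xs by (simp add: map_compose)
qed

section \<open>Two big Ramsey structures for the same limit\<close>

locale two_big_ramsey_structures =
  fixes ar :: "'r \<Rightarrow> nat" and L Ls Lp :: "'r set" and C :: "('r, 'a) struc set"
    and K Ks Kp :: "('r, 'a) struc"
  assumes finite_L: "finite L" and finite_Ls: "finite Ls" and finite_Lp: "finite Lp"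
    and flim: "is_flim ar L C K" and finite_brds: "finite_BRDs ar L C K"
    and big_ramsey_s: "big_ramsey_structure ar L Ls C K Ks"
    and big_ramsey_p: "big_ramsey_structure ar L Lp C K Kp"
begin

lemma expansion_s: "is_expansion ar L Ls K Ks"
  using big_ramsey_s by (simp add: big_ramsey_structure_def)

lemma expansion_p: "is_expansion ar L Lp K Kp"
  using big_ramsey_p by (simp add: big_ramsey_structure_def)

lemma struc_K: "is_struc ar L K" and age_K: "age ar L K = C"
  using flim by (simp_all add: is_flim_def)

lemma brd_witness_BRD: "A \<in> C \<Longrightarrow> brd_witness ar L A K (BRD ar L A K)"
  using finite_brds unfolding finite_BRDs_def BRD_def by (blast intro: LeastI)

lemma ex_copy_same_partition:
  assumes "finite F" "F \<subseteq> C"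
  shows "\<exists>g\<in>emb ar L K K. \<forall>A\<in>F.
    same_partition_on (dot ar L Ls Ks A) (dot ar L Lp Kp A) (embs_through ar L A K g)"
  using assms
proof (induction F rule: finite_induct)
  case empty
  show ?case using emb_restrict_id by blast
next
  case (insert A F)
  then obtain g where g: "g \<in> emb ar L K K"
    and good: "\<forall>B\<in>F. same_partition_on (dot ar L Ls Ks B) (dot ar L Lp Kp B) (embs_through ar L B K g)"
    by auto
  have A: "A \<in> C" using insert.prems by simp
  have "\<exists>h\<in>emb ar L K K. same_partition_on (dot ar L Ls Ks A \<circ> compose (univ A) g)
      (dot ar L Lp Kp A \<circ> compose (univ A) g) (embs_through ar L A K h)"
  proof (rule brd_witness_same_partition[OF brd_witness_BRD[OF A]])
    show "emb ar L A K \<noteq> {}" using A age_K by (auto simp: age_def)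
  next
    fix h assume "h \<in> emb ar L K K"
    then have gh: "compose (univ K) g h \<in> emb ar L K K" using g by (rule emb_compose)
    show "card ((dot ar L Ls Ks A \<circ> compose (univ A) g) ` embs_through ar L A K h) = BRD ar L A K"
      using card_dot_embs_through[OF big_ramsey_s A gh] by (simp add: embs_through_compose image_comp)
    show "card ((dot ar L Lp Kp A \<circ> compose (univ A) g) ` embs_through ar L A K h) = BRD ar L A K"
      using card_dot_embs_through[OF big_ramsey_p A gh] by (simp add: embs_through_compose image_comp)
  qed
  then obtain h where h: "h \<in> emb ar L K K"
    and "same_partition_on (dot ar L Ls Ks A \<circ> compose (univ A) g)
      (dot ar L Lp Kp A \<circ> compose (univ A) g) (embs_through ar L A K h)" ..
  then have "same_partition_on (dot ar L Ls Ks A) (dot ar L Lp Kp A)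
      (embs_through ar L A K (compose (univ K) g h))"
    by (simp add: embs_through_compose same_partition_on_image)
  moreover have "same_partition_on (dot ar L Ls Ks B) (dot ar L Lp Kp B)
      (embs_through ar L B K (compose (univ K) g h))" if "B \<in> F" for B
    using good that embs_through_compose_subset[OF h] by (blast intro: same_partition_on_subset)
  ultimately show ?case using emb_compose[OF h g] by blast
qed

definition arity_tuples :: "'a list set" where
  "arity_tuples = {xs. length xs \<in> ar ` (Ls \<union> Lp) \<and> set xs \<subseteq> univ K}"

definition representative :: "'a list \<Rightarrow> 'a list" where
  "representative xs = inv_into arity_tuples (atomic_type ar L K) (atomic_type ar L K xs)"

lemma representative:
  assumes "xs \<in> arity_tuples"
  shows "representative xs \<in> arity_tuples" "atomic_type ar L K (representative xs) = atomic_type ar L K xs"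
  using assms by (simp_all add: representative_def inv_into_into f_inv_into_f)

definition representative_strucs :: "('r, 'a) struc set" where
  "representative_strucs = (\<lambda>xs. induced_substruc ar L K (set (representative xs))) ` arity_tuples"

lemma finite_representative_strucs: "finite representative_strucs"
proof -
  have "representative_strucs =
      (\<lambda>\<tau>. induced_substruc ar L K (set (inv_into arity_tuples (atomic_type ar L K) \<tau>))) `
        atomic_type ar L K ` arity_tuples"
    by (simp add: representative_strucs_def representative_def image_image)
  moreover have "atomic_type ar L K ` arity_tuples \<subseteq> atomic_type ar L K ` {xs. length xs \<in> ar ` (Ls \<union> Lp)}"
    by (auto simp: arity_tuples_def)
  ultimately show ?thesis
    using finite_atomic_types[OF finite_L, of "ar ` (Ls \<union> Lp)"] finite_Ls finite_Lp
    by (metis finite_Un finite_imageI finite_subset)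
qed

lemma representative_strucs_subset: "representative_strucs \<subseteq> C"
proof
  fix A assume "A \<in> representative_strucs"
  then obtain xs where xs: "xs \<in> arity_tuples" and A: "A = induced_substruc ar L K (set (representative xs))"
    by (auto simp: representative_strucs_def)
  have "set (representative xs) \<subseteq> univ K"
    using representative(1)[OF xs] by (simp add: arity_tuples_def)
  then show "A \<in> C" unfolding A age_K[symmetric] by (rule induced_substruc_in_age[OF finite_set])
qed

lemma atomic_types_through_good_copy:
  assumes g: "g \<in> emb ar L K K"
    and good: "\<forall>A\<in>representative_strucs.
      same_partition_on (dot ar L Ls Ks A) (dot ar L Lp Kp A) (embs_through ar L A K g)"
    and h: "h \<in> emb ar L K K"
    and xs: "xs \<in> arity_tuples" and ys: "ys \<in> arity_tuples"
    and type: "atomic_type ar L K xs = atomic_type ar L K ys"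
  defines "\<eta> \<equiv> compose (univ K) g h"
  shows "atomic_type ar Ls Ks (map \<eta> xs) = atomic_type ar Ls Ks (map \<eta> ys) \<longleftrightarrow>
    atomic_type ar Lp Kp (map \<eta> xs) = atomic_type ar Lp Kp (map \<eta> ys)"
proof -
  define r where "r = representative xs"
  define A where "A = induced_substruc ar L K (set r)"
  have r: "set r \<subseteq> univ K" "atomic_type ar L K r = atomic_type ar L K xs"
    using representative[OF xs] by (auto simp: r_def arity_tuples_def)
  have A: "A \<in> representative_strucs" "is_struc ar L A" "univ A = set r"
    using xs by (auto simp: A_def r_def representative_strucs_def induced_substruc_def is_struc_pullback)
  have copy: "compose (univ A) \<eta> (relabel r zs) \<in> embs_through ar L A K g
      \<and> map (compose (univ A) \<eta> (relabel r zs)) r = map \<eta> zs"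
    if zs: "zs \<in> arity_tuples" "atomic_type ar L K r = atomic_type ar L K zs" for zs
  proof
    have f: "relabel r zs \<in> emb ar L A K"
      using emb_relabel r(1) zs by (auto simp: A_def arity_tuples_def)
    then show "compose (univ A) \<eta> (relabel r zs) \<in> embs_through ar L A K g"
      unfolding \<eta>_def compose_emb_assoc[OF f] using emb_compose[OF f h] by blast
    have "map (relabel r zs) r = zs"
      using atomic_type_eq_length[OF zs(2)] atomic_type_eq_nth_iff[OF zs(2)] by (blast intro: map_relabel)
    then show "map (compose (univ A) \<eta> (relabel r zs)) r = map \<eta> zs"
      using A(3) by (simp add: map_compose)
  qed
  note cx = copy[OF xs r(2)] and cy = copy[OF ys r(2)[unfolded type]]
  let ?fx = "compose (univ A) \<eta> (relabel r xs)" and ?fy = "compose (univ A) \<eta> (relabel r ys)"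
  have embs: "?fx \<in> emb ar L A K" "?fy \<in> emb ar L A K"
    using cx cy embs_through_subset[OF g] by blast+
  have "same_partition_on (dot ar L Ls Ks A) (dot ar L Lp Kp A) (embs_through ar L A K g)"
    using good A(1) by blast
  then have "dot ar L Ls Ks A ?fx = dot ar L Ls Ks A ?fy \<longleftrightarrow> dot ar L Lp Kp A ?fx = dot ar L Lp Kp A ?fy"
    unfolding same_partition_on_def using cx cy by blast
  then show ?thesis
    using cx cy unfolding dot_eq_iff_atomic_type_eq[OF A(2,3) expansion_s embs]
      dot_eq_iff_atomic_type_eq[OF A(2,3) expansion_p embs] by simp
qed

lemma recurrent_imp_bi_interpretable:
  assumes "recurrent ar L Ls K Ks"
  shows "\<exists>\<eta>\<in>emb ar L K K. bi_interpretable ar Ls Ks Lp (pull ar Lp Kp \<eta>)"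
proof -
  obtain g where g: "g \<in> emb ar L K K" and good: "\<forall>A\<in>representative_strucs.
      same_partition_on (dot ar L Ls Ks A) (dot ar L Lp Kp A) (embs_through ar L A K g)"
    using ex_copy_same_partition[OF finite_representative_strucs representative_strucs_subset] by blast
  obtain h where h: "h \<in> emb ar Ls Ks (pull ar Ls Ks g)"
    using assms g unfolding recurrent_def by blast
  have hK: "h \<in> emb ar L K K" by (rule emb_recurrence_witness[OF struc_K expansion_s g h])
  define \<eta> where "\<eta> = compose (univ K) g h"
  have \<eta>: "\<eta> \<in> emb ar L K K" unfolding \<eta>_def by (rule emb_compose[OF hK g])
  have uKs: "univ Ks = univ K" and uKp: "univ (pull ar Lp Kp \<eta>) = univ K"
    using expansionD(3)[OF expansion_s] expansionD(3)[OF expansion_p] by (simp_all add: pull_def)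
  have Ks_type: "atomic_type ar Ls Ks (map \<eta> xs) = atomic_type ar Ls Ks xs" if "set xs \<subseteq> univ K" for xs
    unfolding \<eta>_def using that by (rule atomic_type_recurrence_witness[OF expansion_s g h])
  have Kp_type: "atomic_type ar Lp (pull ar Lp Kp \<eta>) xs = atomic_type ar Lp Kp (map \<eta> xs)"
    if "set xs \<subseteq> univ K" for xs
    using atomic_type_emb[OF emb_pull_expansion[OF expansion_p \<eta>]] that uKp by simp
  have "bi_interpretable ar Ls Ks Lp (pull ar Lp Kp \<eta>)"
  proof (rule bi_interpretableI[OF finite_Ls finite_Lp])
    show "univ Ks = univ (pull ar Lp Kp \<eta>)" using uKs uKp by simp
    fix xs ys assume "length xs \<in> ar ` (Ls \<union> Lp)" "length ys = length xs"
      and sub: "set xs \<subseteq> univ Ks" "set ys \<subseteq> univ Ks"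
    then have tuples: "xs \<in> arity_tuples" "ys \<in> arity_tuples" by (auto simp: arity_tuples_def uKs)
    have "atomic_type ar L K xs = atomic_type ar L K ys"
      if "atomic_type ar Ls Ks xs = atomic_type ar Ls Ks ys"
      using that by (rule atomic_type_expansion[OF expansion_s])
    moreover have "atomic_type ar L K xs = atomic_type ar L K ys"
      if "atomic_type ar Lp (pull ar Lp Kp \<eta>) xs = atomic_type ar Lp (pull ar Lp Kp \<eta>) ys"
    proof -
      have "atomic_type ar L K (map \<eta> xs) = atomic_type ar L K (map \<eta> ys)"
        using that sub uKs Kp_type by (intro atomic_type_expansion[OF expansion_p]) simp
      then show ?thesis using atomic_type_emb[OF \<eta>] sub uKs by simp
    qed
    ultimately show "atomic_type ar Ls Ks xs = atomic_type ar Ls Ks ys \<longleftrightarrow>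
        atomic_type ar Lp (pull ar Lp Kp \<eta>) xs = atomic_type ar Lp (pull ar Lp Kp \<eta>) ys"
      using atomic_types_through_good_copy[OF g good hK tuples] sub uKs Ks_type Kp_type
      unfolding \<eta>_def by auto
  qed
  then show ?thesis using \<eta> by blast
qed

end

theorem corollary2p7:
  fixes ar :: "'r \<Rightarrow> nat"
    and L Ls Lp :: "'r set"
    and C :: "('r, 'a) struc set"
    and K Ks Kp :: "('r, 'a) struc"
  assumes "finite L" "finite Ls" "finite Lp"
    and "fraisse_class ar L C"
    and "is_flim ar L C K"
    and "finite_BRDs ar L C K"
    and "big_ramsey_structure ar L Ls C K Ks" "recurrent ar L Ls K Ks"
    and "big_ramsey_structure ar L Lp C K Kp" "recurrent ar L Lp K Kp"
  shows "(\<exists>\<eta>\<in>emb ar L K K. bi_interpretable ar Ls Ks Lp (pull ar Lp Kp \<eta>)) \<and>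
         (\<exists>\<theta>\<in>emb ar L K K. bi_interpretable ar Lp Kp Ls (pull ar Ls Ks \<theta>))"
proof -
  interpret KsKp: two_big_ramsey_structures ar L Ls Lp C K Ks Kp
    by unfold_locales (use assms in auto)
  interpret KpKs: two_big_ramsey_structures ar L Lp Ls C K Kp Ks
    by unfold_locales (use assms in auto)
  show ?thesis
    using KsKp.recurrent_imp_bi_interpretable[OF assms(8)]
      KpKs.recurrent_imp_bi_interpretable[OF assms(10)] by blast
qed

end
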